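(* For every integer $R\ge 2$, the $R$-counterwall $G_R$ has no $K_6$ minor.
   Context: Let $W_e$ be the elementary wall of height $R$: from the graph with vertex set $\{1,\dots,2R\}\times\{1,\dots,R\}$, with edges $(i,j)(i+1,j)$ for $1\le i<2R$ and $(i,j)(i,j+1)$ for $1\le j<R$ with $i+j$ even, delete the vertices of degree $1$; draw it in the plane with first coordinate increasing to the right and second coordinate increasing upward. Its bricks are the facial $6$-cycles; each brick consists of a bottom path $x_1x_2x_3$ (left to right, in the lower row), a top path $y_1y_2y_3$ (left to right, in the upper row), and the vertical edges $x_1y_1$, $x_3y_3$. The $R$-counterwall $G_R$ is obtained from $W_e$ by doing the following for every brick $B$ (with $\omega_B=y_3$ its top right corner): subdivide the edge $x_2x_3$ by four new vertices $\alpha_B,\beta_B,\gamma_B,\delta_B$ appearing in this order from $x_2$ to $x_3$, and add the six edges $\omega_B\alpha_B$, $\omega_B\beta_B$, $\omega_B\gamma_B$, $\omega_B\delta_B$, $\alpha_B\gamma_B$, $\beta_B\delta_B$. (Each horizontal edge is the bottom edge of at most one brick, so this is well defined.) Each brick together with its four new vertices and six new edges is called a full brick. *)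

theory Defs
  imports Main
begin

definition connected_set :: "('a \<Rightarrow> 'a \<Rightarrow> bool) \<Rightarrow> 'a set \<Rightarrow> bool" where
  "connected_set E S \<longleftrightarrow> S \<noteq> {} \<and>
     (\<forall>x\<in>S. \<forall>y\<in>S. (\<lambda>a b. a \<in> S \<and> b \<in> S \<and> E a b)\<^sup>*\<^sup>* x y)"

definition is_minor ::
  "'b set \<Rightarrow> ('b \<Rightarrow> 'b \<Rightarrow> bool) \<Rightarrow> 'a set \<Rightarrow> ('a \<Rightarrow> 'a \<Rightarrow> bool) \<Rightarrow> bool" where
  "is_minor VH EH VG EG \<longleftrightarrow> (\<exists>\<phi> :: 'b \<Rightarrow> 'a set.
     (\<forall>x\<in>VH. \<phi> x \<subseteq> VG \<and> connected_set EG (\<phi> x)) \<and>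
     (\<forall>x\<in>VH. \<forall>y\<in>VH. x \<noteq> y \<longrightarrow> \<phi> x \<inter> \<phi> y = {}) \<and>
     (\<forall>x\<in>VH. \<forall>y\<in>VH. EH x y \<longrightarrow> (\<exists>a\<in>\<phi> x. \<exists>b\<in>\<phi> y. EG a b)))"

definition K_verts :: "nat \<Rightarrow> nat set" where "K_verts n = {0..<n}"
definition K_edge :: "nat \<Rightarrow> nat \<Rightarrow> bool" where "K_edge x y \<longleftrightarrow> x \<noteq> y"

definition grid_vert :: "nat \<Rightarrow> nat \<times> nat \<Rightarrow> bool" where
  "grid_vert R p \<longleftrightarrow> 1 \<le> fst p \<and> fst p \<le> 2 * R \<and> 1 \<le> snd p \<and> snd p \<le> R"

definition grid_edge :: "nat \<Rightarrow> nat \<times> nat \<Rightarrow> nat \<times> nat \<Rightarrow> bool" where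
  "grid_edge R p q \<longleftrightarrow> grid_vert R p \<and> grid_vert R q \<and>
     ((snd p = snd q \<and> (fst q = fst p + 1 \<or> fst p = fst q + 1)) \<or>
      (fst p = fst q \<and> even (fst p + min (snd p) (snd q)) \<and>
        (snd q = snd p + 1 \<or> snd p = snd q + 1)))"

definition wall_vert :: "nat \<Rightarrow> nat \<times> nat \<Rightarrow> bool" where
  "wall_vert R p \<longleftrightarrow> grid_vert R p \<and> card {q. grid_edge R p q} \<noteq> 1"

definition wall_edge :: "nat \<Rightarrow> nat \<times> nat \<Rightarrow> nat \<times> nat \<Rightarrow> bool" where
  "wall_edge R p q \<longleftrightarrow> wall_vert R p \<and> wall_vert R q \<and> grid_edge R p q"

text \<open>Bricks, indexed by their bottom-left corner x1 = (i,j): bottom path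
  (i,j)(i+1,j)(i+2,j), top path (i,j+1)(i+1,j+1)(i+2,j+1), vertical edges
  at columns i and i+2 (which requires i+j even).\<close>

definition is_brick :: "nat \<Rightarrow> nat \<times> nat \<Rightarrow> bool" where
  "is_brick R b \<longleftrightarrow> 1 \<le> fst b \<and> fst b + 2 \<le> 2 * R \<and> 1 \<le> snd b \<and> snd b < R
     \<and> even (fst b + snd b)"

definition brick_x2 :: "nat \<times> nat \<Rightarrow> nat \<times> nat" where
  "brick_x2 b = (fst b + 1, snd b)"
definition brick_x3 :: "nat \<times> nat \<Rightarrow> nat \<times> nat" where
  "brick_x3 b = (fst b + 2, snd b)"
definition brick_omega :: "nat \<times> nat \<Rightarrow> nat \<times> nat" where
  "brick_omega b = (fst b + 2, snd b + 1)"

text \<open>Vertices: wall vertices, and for each brick b the new vertices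
  NewV b 0, NewV b 1, NewV b 2, NewV b 3 standing for alpha_b, beta_b,
  gamma_b, delta_b.\<close>

datatype cw_vertex = WallV "nat \<times> nat" | NewV "nat \<times> nat" nat

definition cw_vert :: "nat \<Rightarrow> cw_vertex set" where
  "cw_vert R = {WallV p | p. wall_vert R p} \<union> {NewV b k | b k. is_brick R b \<and> k < 4}"

definition cw_edge0 :: "nat \<Rightarrow> cw_vertex \<Rightarrow> cw_vertex \<Rightarrow> bool" where
  "cw_edge0 R u v \<longleftrightarrow>
     (\<exists>p q. u = WallV p \<and> v = WallV q \<and> wall_edge R p q \<and>
        \<not> (\<exists>b. is_brick R b \<and> {p, q} = {brick_x2 b, brick_x3 b})) \<or>
     (\<exists>b. is_brick R b \<and>
        ((u = WallV (brick_x2 b) \<and> v = NewV b 0) \<or>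
         (\<exists>k<3. u = NewV b k \<and> v = NewV b (k + 1)) \<or>
         (u = NewV b 3 \<and> v = WallV (brick_x3 b)) \<or>
         (\<exists>k<4. u = WallV (brick_omega b) \<and> v = NewV b k) \<or>
         (u = NewV b 0 \<and> v = NewV b 2) \<or>
         (u = NewV b 1 \<and> v = NewV b 3)))"

definition cw_edge :: "nat \<Rightarrow> cw_vertex \<Rightarrow> cw_vertex \<Rightarrow> bool" where
  "cw_edge R u v \<longleftrightarrow> cw_edge0 R u v \<or> cw_edge0 R v u"

end

theory Submission
  imports Defs
begin

(* A K6 minor of the counterwall either has a branch set avoiding the wall, or all its branch
   sets meet the wall.  A branch set avoiding the wall lies among the four new vertices of one
   brick; these have degree four, and the brick offers only its three corners x2, x3, omega to
   the other branch sets, which leaves no room for six pairwise adjacent branch sets.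
   Otherwise contract every brick gadget onto its corners, which form a triangle once the
   diagonal x2 omega is added: this yields a K6 minor of the triangulated 2R x R grid.  That
   grid is planar, in MacLane's form: its face boundaries are exactly the even subgraphs.  This
   property survives contracting the branch sets of a K_n minor, and Euler-type counting of the
   merged faces then rules out n >= 5. *)

definition edge_degree :: "('e \<Rightarrow> 'v set) \<Rightarrow> 'e set \<Rightarrow> 'v \<Rightarrow> nat" where
  "edge_degree ends Z v = card {e\<in>Z. v \<in> ends e}"

definition even_subgraph :: "('e \<Rightarrow> 'v set) \<Rightarrow> 'e set \<Rightarrow> bool" where
  "even_subgraph ends Z \<longleftrightarrow> (\<forall>v. even (edge_degree ends Z v))"

lemma card_filter_eq_sum: "finite A \<Longrightarrow> card {a\<in>A. P a} = (\<Sum>a\<in>A. if P a then 1 else 0)"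
  by (simp add: sum.If_cases Int_def)

lemma sum_card_filter_swap:
  assumes "finite A" "finite B"
  shows "(\<Sum>a\<in>A. card {b\<in>B. P a b}) = (\<Sum>b\<in>B. card {a\<in>A. P a b})"
  using assms by (simp add: card_filter_eq_sum sum.swap[of _ A])

lemma even_card_sym_diff:
  assumes "finite A" "finite B"
  shows "even (card ((A - B) \<union> (B - A))) \<longleftrightarrow> (even (card A) \<longleftrightarrow> even (card B))"
proof -
  have "card A = card (A - B) + card (A \<inter> B)" "card B = card (B - A) + card (A \<inter> B)"
    using assms by (simp_all add: card_Diff_subset_Int Int_commute card_mono)
  moreover have "card ((A - B) \<union> (B - A)) = card (A - B) + card (B - A)"
    using assms by (intro card_Un_disjoint) auto
  ultimately have "card A + card B = card ((A - B) \<union> (B - A)) + 2 * card (A \<inter> B)"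
    by simp
  then show ?thesis by (metis even_add even_mult_iff even_numeral)
qed

lemma even_edge_degree_sym_diff:
  assumes "finite A" "finite B"
  shows "even (edge_degree ends ((A - B) \<union> (B - A)) v)
    \<longleftrightarrow> (even (edge_degree ends A v) \<longleftrightarrow> even (edge_degree ends B v))"
proof -
  have "{e\<in>(A - B) \<union> (B - A). v \<in> ends e}
      = ({e\<in>A. v \<in> ends e} - {e\<in>B. v \<in> ends e}) \<union> ({e\<in>B. v \<in> ends e} - {e\<in>A. v \<in> ends e})"
    by auto
  then show ?thesis
    unfolding edge_degree_def using assms by (simp add: even_card_sym_diff)
qed

lemma edge_degree_Un_disjoint:
  assumes "finite A" "finite B" "A \<inter> B = {}"
  shows "edge_degree ends (A \<union> B) v = edge_degree ends A v + edge_degree ends B v"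
proof -
  have "{e\<in>A \<union> B. v \<in> ends e} = {e\<in>A. v \<in> ends e} \<union> {e\<in>B. v \<in> ends e}" by blast
  moreover have "{e\<in>A. v \<in> ends e} \<inter> {e\<in>B. v \<in> ends e} = {}" using assms(3) by blast
  ultimately show ?thesis
    using assms(1,2) by (simp add: edge_degree_def card_Un_disjoint)
qed

section \<open>Eulerian edge sets of complete graphs\<close>

definition complete_edges :: "nat \<Rightarrow> nat set set" where
  "complete_edges n = {p. p \<subseteq> {..<n} \<and> card p = 2}"

definition K_degree :: "nat set set \<Rightarrow> nat \<Rightarrow> nat" where
  "K_degree Y i = card {p\<in>Y. i \<in> p}"

definition eulerian :: "nat \<Rightarrow> nat set set \<Rightarrow> bool" where
  "eulerian n Y \<longleftrightarrow> (\<forall>i<n. even (K_degree Y i))"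

lemma finite_complete_edges: "finite (complete_edges n)"
  unfolding complete_edges_def by (rule finite_subset[of _ "Pow {..<n}"]) auto

lemma card_complete_edges: "card (complete_edges n) = n choose 2"
  using n_subsets[of "{..<n}" 2] by (simp add: complete_edges_def)

lemma complete_edgeE:
  assumes "p \<in> complete_edges n"
  obtains i j where "p = {i, j}" "i \<noteq> j" "i < n" "j < n"
  using assms by (auto simp: complete_edges_def card_2_iff)

lemma eulerian_card_ge_3:
  assumes Y: "Y \<subseteq> complete_edges n" "eulerian n Y" and p: "p \<in> Y"
  shows "3 \<le> card Y"
proof -
  have finY: "finite Y" using Y(1) finite_complete_edges finite_subset by blast
  have another: "\<exists>q\<in>Y. q \<noteq> p \<and> i \<in> q" if i: "i \<in> p" for i
  proof (rule ccontr)
    assume "\<not> ?thesis"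
    then have "{q\<in>Y. i \<in> q} = {p}" using p i by auto
    then have "K_degree Y i = 1" by (simp add: K_degree_def)
    moreover have "i < n" using i p Y(1) by (auto simp: complete_edges_def)
    then have "even (K_degree Y i)" using Y(2) by (simp add: eulerian_def)
    ultimately show False by simp
  qed
  obtain a b where ab: "p = {a, b}" "a \<noteq> b"
    using p Y(1) complete_edgeE by blast
  obtain q where q: "q \<in> Y" "q \<noteq> p" "a \<in> q" using another ab by blast
  obtain r where r: "r \<in> Y" "r \<noteq> p" "b \<in> r" using another ab by blast
  have "q \<noteq> r"
  proof
    assume "q = r"
    then have "p \<subseteq> q" using ab q r by auto
    moreover have "card p = 2" "card q = 2" using p q Y(1) by (auto simp: complete_edges_def)
    ultimately have "p = q" using card_subset_eq[of q p] card_ge_0_finite[of q] by simp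
    then show False using q(2) by simp
  qed
  then have "card {p, q, r} = 3" using q r by auto
  moreover have "card {p, q, r} \<le> card Y" using p q r finY by (intro card_mono) auto
  ultimately show ?thesis by simp
qed

lemma sum_K_degree:
  assumes "Y \<subseteq> complete_edges n"
  shows "(\<Sum>i<n. K_degree Y i) = 2 * card Y"
proof -
  have "finite Y" using assms finite_complete_edges finite_subset by blast
  then have "(\<Sum>i<n. K_degree Y i) = (\<Sum>p\<in>Y. card {i\<in>{..<n}. i \<in> p})"
    unfolding K_degree_def by (intro sum_card_filter_swap) simp_all
  also have "\<dots> = (\<Sum>p\<in>Y. 2)"
  proof (rule sum.cong)
    fix p assume "p \<in> Y"
    then have "p \<subseteq> {..<n}" "card p = 2" using assms by (auto simp: complete_edges_def)
    then have "{i\<in>{..<n}. i \<in> p} = p" by auto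
    then show "card {i\<in>{..<n}. i \<in> p} = 2" using \<open>card p = 2\<close> by simp
  qed simp
  finally show ?thesis by simp
qed

text \<open>Every edge set of \<open>K\<^sub>n - 0\<close> extends to an Eulerian edge set of \<open>K\<^sub>n\<close> by adding the
  edges from \<open>0\<close> to its odd-degree vertices; hence there are at least \<open>2^(n-1 choose 2)\<close> of them.\<close>

definition eulerian_completion :: "nat \<Rightarrow> nat set set \<Rightarrow> nat set set" where
  "eulerian_completion n Y = Y \<union> (\<lambda>i. {0, i}) ` {i \<in> {1..<n}. odd (K_degree Y i)}"

lemma eulerian_completion_subset:
  assumes "Y \<subseteq> complete_edges n" "\<forall>p\<in>Y. 0 \<notin> p"
  shows "eulerian_completion n Y \<subseteq> complete_edges n"
    and "{p \<in> eulerian_completion n Y. 0 \<notin> p} = Y"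
  using assms by (auto simp: eulerian_completion_def complete_edges_def)

lemma eulerian_eulerian_completion:
  assumes Y: "Y \<subseteq> complete_edges n" "\<forall>p\<in>Y. 0 \<notin> p" and i: "i < n"
  shows "even (K_degree (eulerian_completion n Y) i)"
proof -
  define odds where "odds = {i \<in> {1..<n}. odd (K_degree Y i)}"
  have completion: "eulerian_completion n Y = Y \<union> (\<lambda>i. {0, i}) ` odds"
    by (simp add: eulerian_completion_def odds_def)
  show ?thesis
  proof (cases "i = 0")
    case True
    have "{p\<in>Y. 0 \<in> p} = {}" using Y(2) by auto
    then have "K_degree Y 0 = 0" unfolding K_degree_def by (metis card.empty)
    then have "odds = {i\<in>{..<n}. odd (K_degree Y i)}"
      by (auto simp: odds_def Suc_le_eq intro: gr0I)
    then have "even (card odds)"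
      using sum_K_degree[OF Y(1)] even_sum_iff[of "{..<n}" "K_degree Y"] by simp
    moreover have "{p \<in> eulerian_completion n Y. i \<in> p} = (\<lambda>i. {0, i}) ` odds"
      using True Y(2) by (auto simp: completion)
    moreover have "inj_on (\<lambda>i. {0, i}) odds"
      by (auto simp: inj_on_def odds_def doubleton_eq_iff)
    ultimately show ?thesis by (simp add: K_degree_def card_image)
  next
    case False
    have "finite Y" using Y(1) finite_complete_edges finite_subset by blast
    have "{p \<in> eulerian_completion n Y. i \<in> p}
        = {p\<in>Y. i \<in> p} \<union> (if odd (K_degree Y i) then {{0, i}} else {})"
      using False i by (auto simp: completion odds_def doubleton_eq_iff)
    moreover have "{0, i} \<notin> Y" using Y(2) by auto
    ultimately have "K_degree (eulerian_completion n Y) i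
        = K_degree Y i + (if odd (K_degree Y i) then 1 else 0)"
      using \<open>finite Y\<close> by (simp add: K_degree_def)
    then show ?thesis by simp
  qed
qed

lemma card_eulerian_ge:
  assumes "1 \<le> n"
  shows "2 ^ ((n - 1) choose 2) \<le> card {Y. Y \<subseteq> complete_edges n \<and> eulerian n Y}"
proof -
  define Y0 where "Y0 = {p \<in> complete_edges n. 0 \<notin> p}"
  have "Y0 = {p. p \<subseteq> {..<n} - {0} \<and> card p = 2}"
    by (auto simp: Y0_def complete_edges_def)
  then have "card Y0 = (n - 1) choose 2"
    using n_subsets[of "{..<n} - {0}" 2] assms by simp
  then have "2 ^ ((n - 1) choose 2) = card (Pow Y0)"
    using finite_complete_edges by (simp add: Y0_def card_Pow)
  also have "\<dots> = card (eulerian_completion n ` Pow Y0)"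
  proof -
    have "{p \<in> eulerian_completion n Y. 0 \<notin> p} = Y" if "Y \<in> Pow Y0" for Y
      using that eulerian_completion_subset(2)[of Y n] by (auto simp: Y0_def)
    then have "inj_on (eulerian_completion n) (Pow Y0)"
      by (rule inj_on_inverseI)
    then show ?thesis by (simp add: card_image)
  qed
  also have "\<dots> \<le> card {Y. Y \<subseteq> complete_edges n \<and> eulerian n Y}"
  proof (rule card_mono)
    show "finite {Y. Y \<subseteq> complete_edges n \<and> eulerian n Y}"
      using finite_complete_edges by simp
    show "eulerian_completion n ` Pow Y0 \<subseteq> {Y. Y \<subseteq> complete_edges n \<and> eulerian n Y}"
    proof (rule image_subsetI)
      fix Y assume "Y \<in> Pow Y0"
      then have "Y \<subseteq> complete_edges n" "\<forall>p\<in>Y. 0 \<notin> p" by (auto simp: Y0_def)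
      then show "eulerian_completion n Y \<in> {Y. Y \<subseteq> complete_edges n \<and> eulerian n Y}"
        using eulerian_completion_subset(1) eulerian_eulerian_completion
        by (simp add: eulerian_def)
    qed
  qed
  finally show ?thesis .
qed

lemma choose_two_bound:
  assumes "5 \<le> n"
  shows "2 * (n choose 2) < 3 * (((n - 1) choose 2) + 1)"
proof -
  obtain m where n: "n = Suc m" and "4 \<le> m" using assms by (cases n) auto
  have "2 * m < (m choose 2) + 3"
    using \<open>4 \<le> m\<close>
  proof (induction m rule: dec_induct)
    case base
    show ?case by (simp add: choose_two)
  next
    case (step m)
    then show ?case by (simp add: numeral_2_eq_2)
  qed
  moreover have "n choose 2 = m + (m choose 2)"
    by (simp add: n numeral_2_eq_2)
  ultimately show ?thesis by (simp add: n)
qed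

section \<open>T-joins in connected vertex sets\<close>

locale multigraph =
  fixes E :: "'e set" and ends :: "'e \<Rightarrow> 'v set"
  assumes finite_edges: "finite E"
    and card_ends: "e \<in> E \<Longrightarrow> card (ends e) = 2"
begin

definition adj :: "'v \<Rightarrow> 'v \<Rightarrow> bool" where
  "adj a b \<longleftrightarrow> (\<exists>e\<in>E. ends e = {a, b})"

lemma adj_commute: "adj a b \<longleftrightarrow> adj b a"
  by (auto simp: adj_def insert_commute)

definition edges_within :: "'v set \<Rightarrow> 'e set" where
  "edges_within S = {e\<in>E. ends e \<subseteq> S}"

lemma finite_edges_within: "P \<subseteq> edges_within S \<Longrightarrow> finite P"
  using finite_edges by (auto simp: edges_within_def intro: finite_subset)

lemma finite_connected_set:
  assumes "connected_set adj S"
  shows "finite S"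
proof -
  obtain x where "x \<in> S" using assms by (auto simp: connected_set_def)
  have "S \<subseteq> insert x (\<Union>e\<in>E. ends e)"
  proof
    fix y assume "y \<in> S"
    have "(\<lambda>a b. a \<in> S \<and> b \<in> S \<and> adj a b)\<^sup>*\<^sup>* x y"
      using assms \<open>x \<in> S\<close> \<open>y \<in> S\<close> by (auto simp: connected_set_def)
    then show "y \<in> insert x (\<Union>e\<in>E. ends e)"
    proof (cases rule: rtranclp.cases)
      case (rtrancl_into_rtrancl z)
      then obtain e where "e \<in> E" "ends e = {z, y}" by (auto simp: adj_def)
      then show ?thesis by blast
    qed simp
  qed
  moreover have "finite (ends e)" if "e \<in> E" for e
    using card_ends[OF that] by (simp add: card_ge_0_finite)
  then have "finite (\<Union>e\<in>E. ends e)" using finite_edges by blast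
  ultimately show ?thesis by (simp add: finite_subset)
qed

lemma walk_join:
  assumes "(\<lambda>a b. a \<in> S \<and> b \<in> S \<and> adj a b)\<^sup>*\<^sup>* x z"
  shows "\<exists>P \<subseteq> edges_within S. \<forall>v. odd (edge_degree ends P v) \<longleftrightarrow> (v = x) \<noteq> (v = z)"
  using assms
proof (induction rule: rtranclp_induct)
  case base
  show ?case by (rule exI[of _ "{}"]) (simp add: edge_degree_def)
next
  case (step z z')
  then obtain P where P: "P \<subseteq> edges_within S" "\<forall>v. odd (edge_degree ends P v) \<longleftrightarrow> (v = x) \<noteq> (v = z)"
    by blast
  from step.hyps(2) obtain e where e: "e \<in> E" "ends e = {z, z'}" "z \<in> S" "z' \<in> S"
    by (auto simp: adj_def)
  have "z \<noteq> z'" using card_ends[OF e(1)] e(2) by auto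
  have "finite P" using P(1) by (rule finite_edges_within)
  define P' where "P' = (P - {e}) \<union> ({e} - P)"
  have "P' \<subseteq> edges_within S" using P(1) e by (auto simp: P'_def edges_within_def)
  moreover have "odd (edge_degree ends P' v) \<longleftrightarrow> (v = x) \<noteq> (v = z')" for v
  proof -
    have "{e'\<in>{e}. v \<in> ends e'} = (if v = z \<or> v = z' then {e} else {})" using e(2) by auto
    then have "edge_degree ends {e} v = (if v = z \<or> v = z' then 1 else 0)"
      by (simp add: edge_degree_def)
    then show ?thesis
      using even_edge_degree_sym_diff[OF \<open>finite P\<close>, of "{e}" ends v] P(2) \<open>z \<noteq> z'\<close>
      by (auto simp: P'_def)
  qed
  ultimately show ?case by blast
qed

lemma T_join:
  assumes S: "connected_set adj S" and T: "T \<subseteq> S" "even (card T)"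
  shows "\<exists>J \<subseteq> edges_within S. \<forall>v. odd (edge_degree ends J v) \<longleftrightarrow> v \<in> T"
  using T
proof (induction "card T" arbitrary: T rule: less_induct)
  case less
  have "finite T" using less.prems(1) finite_connected_set[OF S] finite_subset by blast
  show ?case
  proof (cases "T = {}")
    case True
    then show ?thesis by (intro exI[of _ "{}"]) (simp add: edge_degree_def)
  next
    case False
    then obtain u where u: "u \<in> T" by blast
    have "T \<noteq> {u}" using less.prems(2) by auto
    then obtain w where w: "w \<in> T" "w \<noteq> u" using u by blast
    define T' where "T' = T - {u, w}"
    have "card T' = card T - 2" using u w \<open>finite T\<close> by (simp add: T'_def card_Diff_subset)
    moreover have "2 \<le> card T"
      using u w \<open>finite T\<close> card_mono[of T "{u, w}"] by simp
    ultimately have "card T' < card T" "even (card T')"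
      using less.prems(2) by auto
    moreover have "T' \<subseteq> S" using less.prems(1) by (auto simp: T'_def)
    ultimately obtain J' where J': "J' \<subseteq> edges_within S"
      "\<forall>v. odd (edge_degree ends J' v) \<longleftrightarrow> v \<in> T'"
      using less.hyps[of T'] by blast
    have "u \<in> S" "w \<in> S" using u w less.prems(1) by auto
    then have "(\<lambda>a b. a \<in> S \<and> b \<in> S \<and> adj a b)\<^sup>*\<^sup>* u w"
      using S by (simp add: connected_set_def)
    from walk_join[OF this] obtain P where P: "P \<subseteq> edges_within S"
      "\<forall>v. odd (edge_degree ends P v) \<longleftrightarrow> (v = u) \<noteq> (v = w)"
      by blast
    have "finite J'" "finite P" using J'(1) P(1) by (simp_all add: finite_edges_within)
    define J where "J = (J' - P) \<union> (P - J')"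
    have "J \<subseteq> edges_within S" using J'(1) P(1) by (auto simp: J_def)
    moreover have "odd (edge_degree ends J v) \<longleftrightarrow> v \<in> T" for v
    proof -
      have "odd (edge_degree ends J v) \<longleftrightarrow> (v \<in> T') \<noteq> ((v = u) \<noteq> (v = w))"
        using even_edge_degree_sym_diff[OF \<open>finite J'\<close> \<open>finite P\<close>, of ends v] J'(2) P(2)
        unfolding J_def by blast
      then show ?thesis using u w by (auto simp: T'_def)
    qed
    ultimately show ?thesis by blast
  qed
qed

end

section \<open>Graphs with a face system have no \<open>K\<^sub>5\<close> minor\<close>

definition face_boundary :: "'e set \<Rightarrow> ('e \<Rightarrow> 'f) \<Rightarrow> ('e \<Rightarrow> 'f) \<Rightarrow> 'f set \<Rightarrow> 'e set" where
  "face_boundary E side1 side2 I = {e\<in>E. (side1 e \<in> I) \<noteq> (side2 e \<in> I)}"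

text \<open>Every edge separates the two faces \<open>side1 e\<close> and \<open>side2 e\<close>, and the face boundaries
  are exactly the even subgraphs: MacLane's 2-basis condition, which holds for plane graphs.\<close>

locale face_system = multigraph E ends
  for E :: "'e set" and ends :: "'e \<Rightarrow> 'v set" +
  fixes side1 side2 :: "'e \<Rightarrow> 'f"
  assumes even_subgraph_face_boundary: "even_subgraph ends (face_boundary E side1 side2 I)"
    and face_boundary_onto:
      "Z \<subseteq> E \<Longrightarrow> even_subgraph ends Z \<Longrightarrow> \<exists>I. face_boundary E side1 side2 I = Z"

text \<open>Contracting the branch sets of a \<open>K\<^sub>n\<close> minor and deleting all other edges keeps a
  face system, whose faces are classes of merged faces.  Each class borders at least three
  edges of \<open>K\<^sub>n\<close> and each edge borders at most two classes, so there are at most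
  \<open>2/3 (n choose 2)\<close> classes.  Complementary sets of classes have the same boundary, so
  the classes generate at most \<open>2^(c - 1)\<close> edge sets, too few for the \<open>2^(n-1 choose 2)\<close>
  Eulerian edge sets of \<open>K\<^sub>n\<close> once \<open>n \<ge> 5\<close>.  This is Euler's formula in disguise.\<close>

locale complete_minor_in_face_system = face_system E ends side1 side2
  for E :: "'e set" and ends :: "'e \<Rightarrow> 'v set" and side1 side2 :: "'e \<Rightarrow> 'f" +
  fixes n :: nat and branch :: "nat \<Rightarrow> 'v set"
  assumes connected_branch: "i < n \<Longrightarrow> connected_set adj (branch i)"
    and disjoint_branch: "i < n \<Longrightarrow> j < n \<Longrightarrow> i \<noteq> j \<Longrightarrow> branch i \<inter> branch j = {}"
    and adjacent_branch: "i < n \<Longrightarrow> j < n \<Longrightarrow> i \<noteq> j \<Longrightarrow> \<exists>a\<in>branch i. \<exists>b\<in>branch j. adj a b"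
begin

abbreviation boundary :: "'f set \<Rightarrow> 'e set" where
  "boundary \<equiv> face_boundary E side1 side2"

definition links :: "'e \<Rightarrow> nat set \<Rightarrow> bool" where
  "links e p \<longleftrightarrow> e \<in> E \<and> (\<exists>i j. p = {i, j} \<and> (\<exists>a\<in>branch i. \<exists>b\<in>branch j. ends e = {a, b}))"

definition link_edge :: "nat set \<Rightarrow> 'e" where
  "link_edge p = (SOME e. links e p)"

lemma links_link_edge:
  assumes "p \<in> complete_edges n"
  shows "links (link_edge p) p"
proof -
  obtain i j where ij: "p = {i, j}" "i \<noteq> j" "i < n" "j < n"
    using assms by (rule complete_edgeE)
  then obtain a b e where "a \<in> branch i" "b \<in> branch j" "e \<in> E" "ends e = {a, b}"
    using adjacent_branch[OF ij(3) ij(4) ij(2)] unfolding adj_def by blast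
  then have "links e p" using ij(1) by (auto simp: links_def)
  then show ?thesis unfolding link_edge_def by (rule someI)
qed

lemma link_edge_in_edges: "p \<in> complete_edges n \<Longrightarrow> link_edge p \<in> E"
  using links_link_edge by (simp add: links_def)

lemma ends_link_edge_subset:
  assumes p: "p \<in> complete_edges n"
  shows "ends (link_edge p) \<subseteq> (\<Union>i<n. branch i)"
proof -
  obtain i j a b where ij: "p = {i, j}" and ab: "a \<in> branch i" "b \<in> branch j"
    and ends: "ends (link_edge p) = {a, b}"
    using links_link_edge[OF p] unfolding links_def by blast
  have "i < n" "j < n" using p ij by (auto simp: complete_edges_def)
  then show ?thesis using ab ends by auto
qed

lemma card_ends_link_edge_inter:
  assumes p: "p \<in> complete_edges n" and k: "k < n"
  shows "card (ends (link_edge p) \<inter> branch k) = (if k \<in> p then 1 else 0)"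
proof -
  obtain i j a b where ij: "p = {i, j}" and ab: "a \<in> branch i" "b \<in> branch j"
    and ends: "ends (link_edge p) = {a, b}"
    using links_link_edge[OF p] by (auto simp: links_def)
  have "i \<noteq> j" "i < n" "j < n"
    using p ij by (auto simp: complete_edges_def card_2_iff doubleton_eq_iff)
  then have "a \<notin> branch l" if "l < n" "l \<noteq> i" for l
    using ab disjoint_branch that by blast
  moreover have "b \<notin> branch l" if "l < n" "l \<noteq> j" for l
    using ab disjoint_branch that \<open>j < n\<close> by blast
  ultimately have "ends (link_edge p) \<inter> branch k
      = (if k = i then {a} else {}) \<union> (if k = j then {b} else {})"
    using ab ends k by auto
  then show ?thesis using ij \<open>i \<noteq> j\<close> by auto
qed

lemma inj_on_link_edge: "inj_on link_edge (complete_edges n)"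
proof (rule inj_on_inverseI)
  fix p assume p: "p \<in> complete_edges n"
  then have "p \<subseteq> {..<n}" by (simp add: complete_edges_def)
  with p show "{k\<in>{..<n}. card (ends (link_edge p) \<inter> branch k) = 1} = p"
    by (auto simp: card_ends_link_edge_inter split: if_splits)
qed

definition inner_edges :: "'e set" where
  "inner_edges = {e\<in>E. \<exists>i<n. ends e \<subseteq> branch i}"

lemma link_edge_not_inner:
  assumes p: "p \<in> complete_edges n"
  shows "link_edge p \<notin> inner_edges"
proof
  assume "link_edge p \<in> inner_edges"
  then obtain k where k: "k < n" "ends (link_edge p) \<subseteq> branch k"
    by (auto simp: inner_edges_def)
  then have "card (ends (link_edge p) \<inter> branch k) = 2"
    using card_ends[OF link_edge_in_edges[OF p]] by (simp add: Int_absorb2)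
  moreover have "card (ends (link_edge p) \<inter> branch k) \<le> 1"
    using card_ends_link_edge_inter[OF p k(1)] by simp
  ultimately show False by simp
qed

definition kept_edges :: "'e set" where
  "kept_edges = link_edge ` complete_edges n \<union> inner_edges"

definition merge_closed :: "'f set \<Rightarrow> bool" where
  "merge_closed I \<longleftrightarrow> (\<forall>e \<in> E - kept_edges. side1 e \<in> I \<longleftrightarrow> side2 e \<in> I)"

definition contracted_boundary :: "'f set \<Rightarrow> nat set set" where
  "contracted_boundary I = {p\<in>complete_edges n. link_edge p \<in> boundary I}"

lemma finite_branch: "i < n \<Longrightarrow> finite (branch i)"
  using connected_branch by (rule finite_connected_set)

lemma sum_edge_degree_branch:
  assumes "finite Z" "k < n"
  shows "(\<Sum>v\<in>branch k. edge_degree ends Z v) = (\<Sum>e\<in>Z. card (ends e \<inter> branch k))"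
proof -
  have "(\<Sum>v\<in>branch k. edge_degree ends Z v) = (\<Sum>e\<in>Z. card {v\<in>branch k. v \<in> ends e})"
    unfolding edge_degree_def using finite_branch[OF assms(2)] assms(1) by (rule sum_card_filter_swap)
  also have "\<dots> = (\<Sum>e\<in>Z. card (ends e \<inter> branch k))"
    by (intro sum.cong) (auto intro: arg_cong[where f = card])
  finally show ?thesis .
qed

lemma sum_link_edges:
  assumes Y: "Y \<subseteq> complete_edges n" and k: "k < n"
  shows "(\<Sum>e\<in>link_edge ` Y. card (ends e \<inter> branch k)) = K_degree Y k"
proof -
  have "finite Y" using Y finite_complete_edges finite_subset by blast
  have "inj_on link_edge Y" using inj_on_link_edge Y inj_on_subset by blast
  then have "(\<Sum>e\<in>link_edge ` Y. card (ends e \<inter> branch k))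
      = (\<Sum>p\<in>Y. card (ends (link_edge p) \<inter> branch k))"
    by (simp add: sum.reindex)
  also have "\<dots> = (\<Sum>p\<in>Y. if k \<in> p then 1 else 0)"
    using Y k by (intro sum.cong) (auto simp: card_ends_link_edge_inter)
  also have "\<dots> = K_degree Y k"
    using \<open>finite Y\<close> by (simp add: K_degree_def card_filter_eq_sum)
  finally show ?thesis .
qed

lemma eulerian_contracted_boundary:
  assumes I: "merge_closed I"
  shows "eulerian n (contracted_boundary I)"
  unfolding eulerian_def
proof (intro allI impI)
  fix k assume k: "k < n"
  define W where "W = boundary I"
  have "finite W" using finite_edges by (simp add: W_def face_boundary_def)
  have W_kept: "W \<subseteq> kept_edges"
    using I by (auto simp: W_def face_boundary_def merge_closed_def)
  let ?L = "link_edge ` complete_edges n" and ?c = "\<lambda>e. card (ends e \<inter> branch k)"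
  have "even (\<Sum>v\<in>branch k. edge_degree ends W v)"
    using even_subgraph_face_boundary by (auto simp: W_def even_subgraph_def intro: dvd_sum)
  moreover have "(\<Sum>v\<in>branch k. edge_degree ends W v) = sum ?c (W \<inter> ?L) + sum ?c (W - ?L)"
    using sum_edge_degree_branch[OF \<open>finite W\<close> k] \<open>finite W\<close> by (metis sum.Int_Diff)
  moreover have "even (sum ?c (W - ?L))"
  proof (rule dvd_sum)
    fix e assume "e \<in> W - ?L"
    then have "e \<in> E" "e \<in> inner_edges"
      using W_kept by (auto simp: kept_edges_def W_def face_boundary_def)
    then obtain l where "l < n" "ends e \<subseteq> branch l" by (auto simp: inner_edges_def)
    then have "ends e \<inter> branch k = (if l = k then ends e else {})"
      using disjoint_branch[of l k] k by auto
    then show "even (card (ends e \<inter> branch k))" using card_ends[OF \<open>e \<in> E\<close>] by simp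
  qed
  ultimately have "even (sum ?c (W \<inter> ?L))" by simp
  moreover have "W \<inter> link_edge ` complete_edges n = link_edge ` contracted_boundary I"
    by (auto simp: W_def contracted_boundary_def)
  moreover have "contracted_boundary I \<subseteq> complete_edges n"
    by (auto simp: contracted_boundary_def)
  ultimately show "even (K_degree (contracted_boundary I) k)"
    using sum_link_edges k by simp
qed

lemma even_card_odd_link_vertices:
  assumes Y: "Y \<subseteq> complete_edges n" "eulerian n Y" and k: "k < n"
  shows "even (card {v\<in>branch k. odd (edge_degree ends (link_edge ` Y) v)})"
proof -
  have "finite Y" using Y(1) finite_complete_edges finite_subset by blast
  then have "even (\<Sum>v\<in>branch k. edge_degree ends (link_edge ` Y) v)"
    using sum_edge_degree_branch[OF _ k] sum_link_edges[OF Y(1) k] Y(2) k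
    by (simp add: eulerian_def)
  then show ?thesis
    using even_sum_iff[where A = "branch k" and f = "edge_degree ends (link_edge ` Y)"]
      finite_branch[OF k]
    by simp
qed

lemma inner_join_exists:
  assumes Y: "Y \<subseteq> complete_edges n" "eulerian n Y"
  shows "\<exists>J \<subseteq> inner_edges. \<forall>k<n. \<forall>v\<in>branch k.
    odd (edge_degree ends J v) \<longleftrightarrow> odd (edge_degree ends (link_edge ` Y) v)"
proof -
  define T where "T k = {v\<in>branch k. odd (edge_degree ends (link_edge ` Y) v)}" for k
  have "\<exists>J. J \<subseteq> edges_within (branch k) \<and> (\<forall>v. odd (edge_degree ends J v) \<longleftrightarrow> v \<in> T k)"
    if k: "k < n" for k
    using T_join[OF connected_branch[OF k], of "T k"] even_card_odd_link_vertices[OF Y k]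
    by (auto simp: T_def)
  then have "\<forall>k. \<exists>J. k < n \<longrightarrow>
      J \<subseteq> edges_within (branch k) \<and> (\<forall>v. odd (edge_degree ends J v) \<longleftrightarrow> v \<in> T k)"
    by blast
  from choice[OF this] obtain Jk where Jk: "\<And>k. k < n \<Longrightarrow> Jk k \<subseteq> edges_within (branch k)"
    "\<And>k v. k < n \<Longrightarrow> odd (edge_degree ends (Jk k) v) \<longleftrightarrow> v \<in> T k"
    by blast
  define J where "J = (\<Union>k<n. Jk k)"
  have "J \<subseteq> inner_edges"
    using Jk(1) unfolding J_def inner_edges_def edges_within_def by blast
  moreover have "odd (edge_degree ends J v) \<longleftrightarrow> odd (edge_degree ends (link_edge ` Y) v)"
    if k: "k < n" "v \<in> branch k" for k v
  proof -
    have "l = k" if "l < n" "e \<in> Jk l" "v \<in> ends e" for l e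
      using Jk(1)[OF that(1)] that disjoint_branch[OF that(1) k(1)] k(2)
      unfolding edges_within_def by blast
    then have "{e\<in>J. v \<in> ends e} = {e\<in>Jk k. v \<in> ends e}"
      using k(1) unfolding J_def by blast
    then show ?thesis
      using Jk(2)[OF k(1), of v] k by (simp add: edge_degree_def T_def)
  qed
  ultimately show ?thesis by blast
qed

lemma even_subgraph_link_edges_Un:
  assumes Y: "Y \<subseteq> complete_edges n" and J: "J \<subseteq> inner_edges"
    and parity: "\<forall>k<n. \<forall>v\<in>branch k.
      odd (edge_degree ends J v) \<longleftrightarrow> odd (edge_degree ends (link_edge ` Y) v)"
  shows "even_subgraph ends (link_edge ` Y \<union> J)"
  unfolding even_subgraph_def
proof
  fix v
  have "finite Y" using Y finite_complete_edges finite_subset by blast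
  moreover have "finite J" using J finite_edges by (auto simp: inner_edges_def intro: finite_subset)
  moreover have "link_edge ` Y \<inter> J = {}" using J Y link_edge_not_inner by blast
  ultimately have deg: "edge_degree ends (link_edge ` Y \<union> J) v
      = edge_degree ends (link_edge ` Y) v + edge_degree ends J v"
    by (intro edge_degree_Un_disjoint) auto
  show "even (edge_degree ends (link_edge ` Y \<union> J) v)"
  proof (cases "\<exists>k<n. v \<in> branch k")
    case True
    then show ?thesis using deg parity by auto
  next
    case False
    then have "{e\<in>link_edge ` Y. v \<in> ends e} = {}" "{e\<in>J. v \<in> ends e} = {}"
      using ends_link_edge_subset Y J unfolding inner_edges_def by blast+
    then have "edge_degree ends (link_edge ` Y) v = 0" "edge_degree ends J v = 0"
      unfolding edge_degree_def by (metis card.empty)+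
    then show ?thesis using deg by simp
  qed
qed

lemma contracted_boundary_onto:
  assumes Y: "Y \<subseteq> complete_edges n" "eulerian n Y"
  shows "\<exists>I. merge_closed I \<and> contracted_boundary I = Y"
proof -
  obtain J where J: "J \<subseteq> inner_edges" "\<forall>k<n. \<forall>v\<in>branch k.
      odd (edge_degree ends J v) \<longleftrightarrow> odd (edge_degree ends (link_edge ` Y) v)"
    using inner_join_exists[OF Y] by blast
  have "link_edge ` Y \<union> J \<subseteq> E"
    using Y(1) J(1) link_edge_in_edges by (auto simp: inner_edges_def)
  then obtain I where I: "boundary I = link_edge ` Y \<union> J"
    using face_boundary_onto even_subgraph_link_edges_Un[OF Y(1) J] by blast
  have "merge_closed I"
    unfolding merge_closed_def
  proof
    fix e assume e: "e \<in> E - kept_edges"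
    then have "e \<notin> boundary I" using Y(1) J(1) I by (auto simp: kept_edges_def)
    then show "side1 e \<in> I \<longleftrightarrow> side2 e \<in> I" using e by (auto simp: face_boundary_def)
  qed
  moreover have "contracted_boundary I = Y"
  proof (rule set_eqI)
    fix p
    show "p \<in> contracted_boundary I \<longleftrightarrow> p \<in> Y"
    proof (cases "p \<in> complete_edges n")
      case True
      have "link_edge p \<notin> J" using J(1) link_edge_not_inner[OF True] by blast
      moreover have "link_edge p \<in> link_edge ` Y \<longleftrightarrow> p \<in> Y"
        using inj_on_image_mem_iff[OF inj_on_link_edge True Y(1)] .
      ultimately show ?thesis using I True by (simp add: contracted_boundary_def)
    qed (use Y(1) in \<open>auto simp: contracted_boundary_def\<close>)
  qed
  ultimately show ?thesis by blast
qed

definition face_step :: "'f \<Rightarrow> 'f \<Rightarrow> bool" where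
  "face_step f g \<longleftrightarrow> (\<exists>e \<in> E - kept_edges. side1 e = f \<and> side2 e = g)"

abbreviation merged :: "'f \<Rightarrow> 'f \<Rightarrow> bool" where
  "merged \<equiv> (symclp face_step)\<^sup>*\<^sup>*"

definition merged_face :: "'f \<Rightarrow> 'f set" where
  "merged_face f = {g. merged f g}"

lemma merged_face_eq_iff: "merged_face f = merged_face g \<longleftrightarrow> merged f g"
  using equivp_rtranclp_symclp[of face_step]
  unfolding merged_face_def equivp_def by (metis Collect_cong mem_Collect_eq)

lemma merge_closed_merged_face: "merge_closed (merged_face f)"
  unfolding merge_closed_def merged_face_def
proof
  fix e assume "e \<in> E - kept_edges"
  then have "symclp face_step (side1 e) (side2 e)" "symclp face_step (side2 e) (side1 e)"
    by (auto simp: face_step_def symclp_def)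
  then show "side1 e \<in> {g. merged f g} \<longleftrightarrow> side2 e \<in> {g. merged f g}"
    by (auto intro: rtranclp.rtrancl_into_rtrancl)
qed

lemma merged_face_subset:
  assumes I: "merge_closed I" and f: "f \<in> I"
  shows "merged_face f \<subseteq> I"
proof
  fix g assume "g \<in> merged_face f"
  then have "merged f g" by (simp add: merged_face_def)
  then show "g \<in> I"
  proof (induction rule: rtranclp_induct)
    case (step g h)
    from step.hyps(2) obtain e where
      "e \<in> E - kept_edges" "side1 e = g \<and> side2 e = h \<or> side1 e = h \<and> side2 e = g"
      by (auto simp: symclp_def face_step_def)
    with I step.IH show ?case by (auto simp: merge_closed_def)
  qed (rule f)
qed

lemma merge_closed_mem_iff:
  assumes I: "merge_closed I"
  shows "f \<in> I \<longleftrightarrow> merged_face f \<in> merged_face ` I"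
proof
  assume "merged_face f \<in> merged_face ` I"
  then obtain g where "g \<in> I" "merged_face g = merged_face f" by auto
  then have "f \<in> merged_face g" using merged_face_eq_iff by (simp add: merged_face_def)
  then show "f \<in> I" using merged_face_subset[OF I \<open>g \<in> I\<close>] by blast
qed simp

definition side_class1 :: "nat set \<Rightarrow> 'f set" where
  "side_class1 p = merged_face (side1 (link_edge p))"

definition side_class2 :: "nat set \<Rightarrow> 'f set" where
  "side_class2 p = merged_face (side2 (link_edge p))"

definition class_boundary :: "'f set set \<Rightarrow> nat set set" where
  "class_boundary A = {p\<in>complete_edges n. (side_class1 p \<in> A) \<noteq> (side_class2 p \<in> A)}"

lemma contracted_boundary_eq_class_boundary:
  assumes I: "merge_closed I"
  shows "contracted_boundary I = class_boundary (merged_face ` I)"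
proof -
  have "(side1 e \<in> I) \<noteq> (side2 e \<in> I) \<longleftrightarrow>
      (merged_face (side1 e) \<in> merged_face ` I) \<noteq> (merged_face (side2 e) \<in> merged_face ` I)" for e
    by (simp only: merge_closed_mem_iff[OF I])
  then show ?thesis
    using link_edge_in_edges
    by (auto simp: contracted_boundary_def class_boundary_def face_boundary_def
        side_class1_def side_class2_def)
qed

definition border_classes :: "'f set set" where
  "border_classes = (\<Union>p\<in>{p\<in>complete_edges n. side_class1 p \<noteq> side_class2 p}. {side_class1 p, side_class2 p})"

lemma finite_border_classes: "finite border_classes"
  using finite_complete_edges by (simp add: border_classes_def)

lemma side_classes_in_border:
  "p \<in> complete_edges n \<Longrightarrow> side_class1 p \<noteq> side_class2 p \<Longrightarrow>
    side_class1 p \<in> border_classes \<and> side_class2 p \<in> border_classes"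
  by (auto simp: border_classes_def)

lemma class_boundary_Int_border: "class_boundary A = class_boundary (A \<inter> border_classes)"
  unfolding class_boundary_def
proof (intro Collect_cong conj_cong refl)
  fix p assume "p \<in> complete_edges n"
  then show "(side_class1 p \<in> A) \<noteq> (side_class2 p \<in> A) \<longleftrightarrow>
      (side_class1 p \<in> A \<inter> border_classes) \<noteq> (side_class2 p \<in> A \<inter> border_classes)"
    using side_classes_in_border by (cases "side_class1 p = side_class2 p") auto
qed

lemma class_boundary_complement: "class_boundary A = class_boundary (border_classes - A)"
  unfolding class_boundary_def
proof (intro Collect_cong conj_cong refl)
  fix p assume "p \<in> complete_edges n"
  then show "(side_class1 p \<in> A) \<noteq> (side_class2 p \<in> A) \<longleftrightarrow>
      (side_class1 p \<in> border_classes - A) \<noteq> (side_class2 p \<in> border_classes - A)"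
    using side_classes_in_border by (cases "side_class1 p = side_class2 p") auto
qed

lemma card_class_boundary_ge_3:
  assumes "c \<in> border_classes"
  shows "3 \<le> card (class_boundary {c})"
proof -
  obtain p f where p: "p \<in> complete_edges n" "side_class1 p \<noteq> side_class2 p"
    and c: "c = merged_face f" "f = side1 (link_edge p) \<or> f = side2 (link_edge p)"
    using assms by (auto simp: border_classes_def side_class1_def side_class2_def)
  have "merged_face ` c = {c}"
    using merged_face_eq_iff c(1) by (auto simp: merged_face_def)
  then have "class_boundary {c} = contracted_boundary c"
    using contracted_boundary_eq_class_boundary[OF merge_closed_merged_face] c(1) by simp
  then have "eulerian n (class_boundary {c})"
    using eulerian_contracted_boundary[OF merge_closed_merged_face] c(1) by simp
  moreover have "p \<in> class_boundary {c}"
    using p c by (auto simp: class_boundary_def side_class1_def side_class2_def)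
  moreover have "class_boundary {c} \<subseteq> complete_edges n"
    by (auto simp: class_boundary_def)
  ultimately show ?thesis using eulerian_card_ge_3 by blast
qed

lemma card_border_classes: "3 * card border_classes \<le> 2 * (n choose 2)"
proof -
  define borders where
    "borders c p \<longleftrightarrow> c \<in> {side_class1 p, side_class2 p} \<and> side_class1 p \<noteq> side_class2 p" for c p
  have "3 * card border_classes = (\<Sum>c\<in>border_classes. 3)" by simp
  also have "\<dots> \<le> (\<Sum>c\<in>border_classes. card (class_boundary {c}))"
    by (intro sum_mono card_class_boundary_ge_3)
  also have "\<dots> = (\<Sum>c\<in>border_classes. card {p\<in>complete_edges n. borders c p})"
    by (intro sum.cong arg_cong[where f = card]) (auto simp: class_boundary_def borders_def)
  also have "\<dots> = (\<Sum>p\<in>complete_edges n. card {c\<in>border_classes. borders c p})"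
    using finite_border_classes finite_complete_edges by (rule sum_card_filter_swap)
  also have "\<dots> \<le> (\<Sum>p\<in>complete_edges n. 2)"
  proof (intro sum_mono)
    fix p
    have "card {c\<in>border_classes. borders c p} \<le> card {side_class1 p, side_class2 p}"
      by (intro card_mono) (auto simp: borders_def)
    also have "\<dots> \<le> 2" by (simp add: card_insert_if)
    finally show "card {c\<in>border_classes. borders c p} \<le> 2" .
  qed
  also have "\<dots> = 2 * (n choose 2)" by (simp add: card_complete_edges)
  finally show ?thesis .
qed

lemma card_eulerian_le: "card {Y. Y \<subseteq> complete_edges n \<and> eulerian n Y} \<le> 2 ^ (card border_classes - 1)"
proof -
  obtain c0 where c0: "border_classes \<noteq> {} \<Longrightarrow> c0 \<in> border_classes" by blast
  have "{Y. Y \<subseteq> complete_edges n \<and> eulerian n Y} \<subseteq> class_boundary ` Pow (border_classes - {c0})"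
  proof
    fix Y assume "Y \<in> {Y. Y \<subseteq> complete_edges n \<and> eulerian n Y}"
    then obtain I where I: "merge_closed I" "contracted_boundary I = Y"
      using contracted_boundary_onto by blast
    define A where "A = merged_face ` I \<inter> border_classes"
    have "Y = class_boundary A"
      using I contracted_boundary_eq_class_boundary class_boundary_Int_border by (simp add: A_def)
    then show "Y \<in> class_boundary ` Pow (border_classes - {c0})"
      using class_boundary_complement[of A] by (cases "c0 \<in> A") (auto simp: A_def)
  qed
  then have "card {Y. Y \<subseteq> complete_edges n \<and> eulerian n Y} \<le> card (class_boundary ` Pow (border_classes - {c0}))"
    using finite_border_classes by (intro card_mono) auto
  also have "\<dots> \<le> card (Pow (border_classes - {c0}))"
    using finite_border_classes by (intro card_image_le) simp
  also have "\<dots> = 2 ^ (card border_classes - 1)"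
    using finite_border_classes c0 by (cases "border_classes = {}") (auto simp: card_Pow)
  finally show ?thesis .
qed

theorem at_most_4_branch_sets: "n \<le> 4"
proof (rule ccontr)
  assume "\<not> n \<le> 4"
  then have "2 ^ ((n - 1) choose 2) \<le> (2::nat) ^ (card border_classes - 1)"
    using order_trans[OF card_eulerian_ge card_eulerian_le] by simp
  then have "(n - 1) choose 2 \<le> card border_classes - 1"
    by (rule power_le_imp_le_exp[rotated]) simp
  moreover have "0 < (n - 1) choose 2"
    using \<open>\<not> n \<le> 4\<close> by (simp add: zero_less_binomial_iff)
  ultimately have "((n - 1) choose 2) + 1 \<le> card border_classes"
    by arith
  then have "3 * (((n - 1) choose 2) + 1) \<le> 2 * (n choose 2)"
    using card_border_classes by (meson mult_le_mono2 order_trans)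
  moreover have "2 * (n choose 2) < 3 * (((n - 1) choose 2) + 1)"
    using \<open>\<not> n \<le> 4\<close> by (intro choose_two_bound) simp
  ultimately show False by linarith
qed

end

lemma (in face_system) no_complete_minor:
  assumes "5 \<le> n"
  shows "\<not> is_minor (K_verts n) K_edge V adj"
proof
  assume "is_minor (K_verts n) K_edge V adj"
  then obtain branch where
    "\<forall>i\<in>{0..<n}. branch i \<subseteq> V \<and> connected_set adj (branch i)"
    "\<forall>i\<in>{0..<n}. \<forall>j\<in>{0..<n}. i \<noteq> j \<longrightarrow> branch i \<inter> branch j = {}"
    "\<forall>i\<in>{0..<n}. \<forall>j\<in>{0..<n}. K_edge i j \<longrightarrow> (\<exists>a\<in>branch i. \<exists>b\<in>branch j. adj a b)"
    unfolding is_minor_def K_verts_def by blast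
  then interpret complete_minor_in_face_system E ends side1 side2 n branch
    by unfold_locales (auto simp: K_edge_def)
  show False using at_most_4_branch_sets assms by simp
qed

section \<open>The triangulated grid\<close>

text \<open>Vertices \<open>(x, y)\<close> with \<open>1 \<le> x \<le> w\<close>, \<open>1 \<le> y \<le> h\<close>; every unit square \<open>(x, y)\<close> is cut by the
  diagonal \<open>Diag x y\<close> into the triangles \<open>Lower x y\<close> (below the diagonal) and \<open>Upper x y\<close>.\<close>

datatype tri_edge = Hor nat nat | Ver nat nat | Diag nat nat

datatype tri_face = Outer | Lower nat nat | Upper nat nat

fun tri_ends :: "tri_edge \<Rightarrow> (nat \<times> nat) set" where
  "tri_ends (Hor x y) = {(x, y), (Suc x, y)}"
| "tri_ends (Ver x y) = {(x, y), (x, Suc y)}"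
| "tri_ends (Diag x y) = {(x, y), (Suc x, Suc y)}"

fun tri_edge_in :: "nat \<Rightarrow> nat \<Rightarrow> tri_edge \<Rightarrow> bool" where
  "tri_edge_in w h (Hor x y) \<longleftrightarrow> 1 \<le> x \<and> x < w \<and> 1 \<le> y \<and> y \<le> h"
| "tri_edge_in w h (Ver x y) \<longleftrightarrow> 1 \<le> x \<and> x \<le> w \<and> 1 \<le> y \<and> y < h"
| "tri_edge_in w h (Diag x y) \<longleftrightarrow> 1 \<le> x \<and> x < w \<and> 1 \<le> y \<and> y < h"

definition tri_edges :: "nat \<Rightarrow> nat \<Rightarrow> tri_edge set" where
  "tri_edges w h = {e. tri_edge_in w h e}"

definition in_square :: "nat \<Rightarrow> nat \<Rightarrow> nat \<Rightarrow> nat \<Rightarrow> bool" where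
  "in_square w h x y \<longleftrightarrow> 1 \<le> x \<and> x < w \<and> 1 \<le> y \<and> y < h"

definition lower_face :: "nat \<Rightarrow> nat \<Rightarrow> nat \<Rightarrow> nat \<Rightarrow> tri_face" where
  "lower_face w h x y = (if in_square w h x y then Lower x y else Outer)"

definition upper_face :: "nat \<Rightarrow> nat \<Rightarrow> nat \<Rightarrow> nat \<Rightarrow> tri_face" where
  "upper_face w h x y = (if in_square w h x y then Upper x y else Outer)"

text \<open>\<open>tri_side1\<close> is the face below or to the left of an edge, \<open>tri_side2\<close> the one above or to
  the right.  Edges outside the grid get \<open>Outer\<close> on both sides.\<close>

fun tri_side1 :: "nat \<Rightarrow> nat \<Rightarrow> tri_edge \<Rightarrow> tri_face" where
  "tri_side1 w h (Hor x y) = upper_face w h x (y - 1)"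
| "tri_side1 w h (Ver x y) = lower_face w h (x - 1) y"
| "tri_side1 w h (Diag x y) = lower_face w h x y"

fun tri_side2 :: "nat \<Rightarrow> nat \<Rightarrow> tri_edge \<Rightarrow> tri_face" where
  "tri_side2 w h (Hor x y) = lower_face w h x y"
| "tri_side2 w h (Ver x y) = upper_face w h x y"
| "tri_side2 w h (Diag x y) = upper_face w h x y"

lemma finite_tri_edges: "finite (tri_edges w h)"
proof -
  let ?B = "{..w} \<times> {..h}"
  have "tri_edges w h \<subseteq> case_prod Hor ` ?B \<union> case_prod Ver ` ?B \<union> case_prod Diag ` ?B"
  proof
    fix e assume "e \<in> tri_edges w h"
    then show "e \<in> case_prod Hor ` ?B \<union> case_prod Ver ` ?B \<union> case_prod Diag ` ?B"
      by (cases e) (auto simp: tri_edges_def image_iff)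
  qed
  then show ?thesis by (rule finite_subset) auto
qed

lemma card_tri_ends: "card (tri_ends e) = 2"
  by (cases e) auto

lemma tri_sides_outside: "\<not> tri_edge_in w h e \<Longrightarrow> tri_side1 w h e = tri_side2 w h e"
  by (cases e) (auto simp: lower_face_def upper_face_def in_square_def)

lemma face_boundary_tri_edges:
  "face_boundary (tri_edges w h) (tri_side1 w h) (tri_side2 w h) I
    = {e. (tri_side1 w h e \<in> I) \<noteq> (tri_side2 w h e \<in> I)}"
  using tri_sides_outside by (fastforce simp: face_boundary_def tri_edges_def)

lemma tri_edges_incident:
  assumes "1 \<le> x" "1 \<le> y"
  shows "{e. (x, y) \<in> tri_ends e}
    = {Hor x y, Hor (x - 1) y, Ver x y, Ver x (y - 1), Diag x y, Diag (x - 1) (y - 1)}"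
proof (rule set_eqI)
  fix e show "e \<in> {e. (x, y) \<in> tri_ends e} \<longleftrightarrow>
      e \<in> {Hor x y, Hor (x - 1) y, Ver x y, Ver x (y - 1), Diag x y, Diag (x - 1) (y - 1)}"
    using assms by (cases e) auto
qed

lemma edge_degree_tri:
  assumes "finite Z" "1 \<le> x" "1 \<le> y"
  shows "edge_degree tri_ends Z (x, y) =
    of_bool (Hor x y \<in> Z) + of_bool (Hor (x - 1) y \<in> Z) + of_bool (Ver x y \<in> Z) +
    of_bool (Ver x (y - 1) \<in> Z) + of_bool (Diag x y \<in> Z) + of_bool (Diag (x - 1) (y - 1) \<in> Z)"
proof -
  let ?N = "{Hor x y, Hor (x - 1) y, Ver x y, Ver x (y - 1), Diag x y, Diag (x - 1) (y - 1)}"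
  have "{e\<in>Z. (x, y) \<in> tri_ends e} = {e\<in>?N. e \<in> Z}"
    using tri_edges_incident[OF assms(2,3)] by blast
  then have "edge_degree tri_ends Z (x, y) = card {e\<in>?N. e \<in> Z}"
    by (simp only: edge_degree_def)
  also have "\<dots> = (\<Sum>e\<in>?N. if e \<in> Z then 1 else 0)"
    by (rule card_filter_eq_sum) simp
  finally show ?thesis using assms(2,3) by (simp add: add.assoc)
qed

lemma tri_edge_in_ends_pos: "tri_edge_in w h e \<Longrightarrow> (x, y) \<in> tri_ends e \<Longrightarrow> 1 \<le> x \<and> 1 \<le> y"
  by (cases e) auto

lemma even_tri_face_boundary:
  "even_subgraph tri_ends (face_boundary (tri_edges w h) (tri_side1 w h) (tri_side2 w h) I)"
  unfolding even_subgraph_def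
proof
  fix v :: "nat \<times> nat"
  obtain x y where v: "v = (x, y)" by fastforce
  let ?Z = "face_boundary (tri_edges w h) (tri_side1 w h) (tri_side2 w h) I"
  have "finite ?Z" using finite_tri_edges by (simp add: face_boundary_def)
  show "even (edge_degree tri_ends ?Z v)"
  proof (cases "1 \<le> x \<and> 1 \<le> y")
    case False
    then have "{e\<in>?Z. v \<in> tri_ends e} = {}"
      using tri_edge_in_ends_pos by (fastforce simp: v face_boundary_def tri_edges_def)
    then have "edge_degree tri_ends ?Z v = 0"
      unfolding edge_degree_def by (metis card.empty)
    then show ?thesis by simp
  next
    case True
    let ?A = "upper_face w h x (y - 1) \<in> I" and ?B = "lower_face w h x y \<in> I"
      and ?C = "upper_face w h (x - 1) (y - 1) \<in> I" and ?D = "lower_face w h (x - 1) y \<in> I"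
      and ?E = "upper_face w h x y \<in> I" and ?F = "lower_face w h (x - 1) (y - 1) \<in> I"
    have "edge_degree tri_ends ?Z v = of_bool (?A \<noteq> ?B) + of_bool (?C \<noteq> ?D) + of_bool (?D \<noteq> ?E)
        + of_bool (?F \<noteq> ?A) + of_bool (?B \<noteq> ?E) + of_bool (?F \<noteq> ?C)"
      using edge_degree_tri[OF \<open>finite ?Z\<close>] True by (simp add: v face_boundary_tri_edges)
    then show ?thesis
      by (cases ?A; cases ?B; cases ?C; cases ?D; cases ?E; cases ?F) simp_all
  qed
qed

text \<open>To realise an even subgraph \<open>Z\<close> as a face boundary, walk up each column of squares
  from the outer face and take a triangle iff an odd number of edges of \<open>Z\<close> has been crossed.
  The even degrees at the vertices make this consistent across the vertical edges and at the
  top of each column.\<close>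

definition lower_count :: "tri_edge set \<Rightarrow> nat \<Rightarrow> nat \<Rightarrow> nat" where
  "lower_count Z x y = (\<Sum>y'\<le>y. of_bool (Hor x y' \<in> Z)) + (\<Sum>y'<y. of_bool (Diag x y' \<in> Z))"

definition upper_count :: "tri_edge set \<Rightarrow> nat \<Rightarrow> nat \<Rightarrow> nat" where
  "upper_count Z x y = lower_count Z x y + of_bool (Diag x y \<in> Z)"

definition column_faces :: "nat \<Rightarrow> nat \<Rightarrow> tri_edge set \<Rightarrow> tri_face set" where
  "column_faces w h Z =
    {Lower x y | x y. in_square w h x y \<and> odd (lower_count Z x y)} \<union>
    {Upper x y | x y. in_square w h x y \<and> odd (upper_count Z x y)}"

lemma lower_count_Suc: "lower_count Z x (Suc y) = upper_count Z x y + of_bool (Hor x (Suc y) \<in> Z)"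
  by (simp add: lower_count_def upper_count_def)

locale tri_even_subgraph =
  fixes w h :: nat and Z :: "tri_edge set"
  assumes Z_edges: "Z \<subseteq> tri_edges w h" and Z_even: "even_subgraph tri_ends Z"
begin

lemma not_in_Z_outside: "\<not> tri_edge_in w h e \<Longrightarrow> e \<notin> Z"
  using Z_edges by (auto simp: tri_edges_def)

lemma count_outside_columns:
  assumes "x = 0 \<or> w \<le> x"
  shows "lower_count Z x y = 0" "upper_count Z x y = 0"
  using assms not_in_Z_outside by (auto simp: lower_count_def upper_count_def)

lemma count_bottom: "lower_count Z x 0 = 0" "upper_count Z x 0 = 0"
  using not_in_Z_outside by (auto simp: lower_count_def upper_count_def)

lemma vertical_parity:
  assumes "1 \<le> x"
  shows "even (upper_count Z x y + lower_count Z (x - 1) y + of_bool (Ver x y \<in> Z))"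
proof (induction y)
  case 0
  then show ?case using not_in_Z_outside by (simp add: count_bottom)
next
  case (Suc y)
  have "finite Z" using Z_edges finite_tri_edges by (rule finite_subset)
  define S where "S = of_bool (Hor x (Suc y) \<in> Z) + of_bool (Hor (x - 1) (Suc y) \<in> Z)
      + of_bool (Ver x (Suc y) \<in> Z) + of_bool (Ver x y \<in> Z) + of_bool (Diag x (Suc y) \<in> Z)
      + (of_bool (Diag (x - 1) y \<in> Z) :: nat)"
  define V where "V = (of_bool (Ver x y \<in> Z) :: nat)"
  have "even (edge_degree tri_ends Z (x, Suc y))"
    using Z_even by (simp add: even_subgraph_def)
  then have "even S"
    using edge_degree_tri[OF \<open>finite Z\<close> assms] by (simp add: S_def)
  have eq: "upper_count Z x (Suc y) + lower_count Z (x - 1) (Suc y) + of_bool (Ver x (Suc y) \<in> Z)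
      + 2 * V = (upper_count Z x y + lower_count Z (x - 1) y + V) + S"
    by (simp add: S_def V_def lower_count_Suc upper_count_def)
  have "even ((upper_count Z x y + lower_count Z (x - 1) y + V) + S)"
    using Suc.IH[folded V_def] \<open>even S\<close> by simp
  then have "even (upper_count Z x (Suc y) + lower_count Z (x - 1) (Suc y)
      + of_bool (Ver x (Suc y) \<in> Z) + 2 * V)"
    unfolding eq .
  then show ?case by simp
qed

lemma top_parity: "even (lower_count Z x h)"
proof (induction x)
  case 0
  then show ?case by (simp add: count_outside_columns)
next
  case (Suc x)
  have "even (upper_count Z (Suc x) h + lower_count Z x h + of_bool (Ver (Suc x) h \<in> Z))"
    using vertical_parity[of "Suc x" h] by simp
  moreover have "upper_count Z (Suc x) h = lower_count Z (Suc x) h" "Ver (Suc x) h \<notin> Z"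
    using not_in_Z_outside by (auto simp: upper_count_def)
  ultimately show ?case using Suc.IH by simp
qed

lemma lower_face_mem_column_faces:
  assumes "x \<le> w" "y \<le> h"
  shows "lower_face w h x y \<in> column_faces w h Z \<longleftrightarrow> odd (lower_count Z x y)"
proof (cases "in_square w h x y")
  case False
  then have "x = 0 \<or> w \<le> x \<or> y = 0 \<or> y = h" using assms by (auto simp: in_square_def)
  then show ?thesis
    using False count_outside_columns count_bottom top_parity
    by (auto simp: lower_face_def column_faces_def)
qed (auto simp: lower_face_def column_faces_def)

lemma upper_face_mem_column_faces:
  assumes "x \<le> w" "y < h"
  shows "upper_face w h x y \<in> column_faces w h Z \<longleftrightarrow> odd (upper_count Z x y)"
proof (cases "in_square w h x y")
  case False
  then have "x = 0 \<or> w \<le> x \<or> y = 0" using assms by (auto simp: in_square_def)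
  then show ?thesis
    using False count_outside_columns count_bottom
    by (auto simp: upper_face_def column_faces_def)
qed (auto simp: upper_face_def column_faces_def)

lemma column_faces_separate:
  assumes "tri_edge_in w h e"
  shows "(tri_side1 w h e \<in> column_faces w h Z) \<noteq> (tri_side2 w h e \<in> column_faces w h Z)
    \<longleftrightarrow> e \<in> Z"
proof (cases e)
  case (Hor x y)
  with assms have "x \<le> w" "y \<le> h" "y - 1 < h" "Suc (y - 1) = y" by auto
  then show ?thesis
    using Hor lower_count_Suc[of Z x "y - 1"] lower_face_mem_column_faces[of x y]
      upper_face_mem_column_faces[of x "y - 1"]
    by (cases "Hor x y \<in> Z") simp_all
next
  case (Ver x y)
  then show ?thesis
    using assms vertical_parity[of x y]
    by (cases "Ver x y \<in> Z") (auto simp: lower_face_mem_column_faces upper_face_mem_column_faces)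
next
  case (Diag x y)
  then show ?thesis
    using assms
    by (cases "Diag x y \<in> Z")
      (simp_all add: lower_face_mem_column_faces upper_face_mem_column_faces upper_count_def)
qed

lemma face_boundary_column_faces:
  "face_boundary (tri_edges w h) (tri_side1 w h) (tri_side2 w h) (column_faces w h Z) = Z"
  using column_faces_separate not_in_Z_outside by (auto simp: face_boundary_def tri_edges_def)

end

interpretation tri_grid: face_system "tri_edges w h" tri_ends "tri_side1 w h" "tri_side2 w h" for w h
proof
  show "finite (tri_edges w h)" by (rule finite_tri_edges)
  show "card (tri_ends e) = 2" for e by (rule card_tri_ends)
  show "even_subgraph tri_ends (face_boundary (tri_edges w h) (tri_side1 w h) (tri_side2 w h) I)" for I
    by (rule even_tri_face_boundary)
  show "\<exists>I. face_boundary (tri_edges w h) (tri_side1 w h) (tri_side2 w h) I = Z"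
    if "Z \<subseteq> tri_edges w h" "even_subgraph tri_ends Z" for Z
    using tri_even_subgraph.face_boundary_column_faces[OF tri_even_subgraph.intro[OF that]] by blast
qed

section \<open>The counterwall\<close>

abbreviation wall_grid_adj :: "nat \<Rightarrow> nat \<times> nat \<Rightarrow> nat \<times> nat \<Rightarrow> bool" where
  "wall_grid_adj R \<equiv> multigraph.adj (tri_edges (2 * R) R) tri_ends"

definition brick_corners :: "nat \<times> nat \<Rightarrow> (nat \<times> nat) set" where
  "brick_corners b = {brick_x2 b, brick_x3 b, brick_omega b}"

definition gadget :: "nat \<times> nat \<Rightarrow> cw_vertex set" where
  "gadget b = NewV b ` {..<4}"

lemma cw_edge_commute: "cw_edge R u v \<longleftrightarrow> cw_edge R v u"
  unfolding cw_edge_def by blast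

lemma gadget_neighbour:
  assumes "cw_edge R (NewV b t) u"
  shows "is_brick R b \<and> (u \<in> range (NewV b) \<or> u \<in> WallV ` brick_corners b)"
  using assms unfolding cw_edge_def cw_edge0_def brick_corners_def by auto

lemma tri_adjI:
  "e \<in> tri_edges w h \<Longrightarrow> tri_ends e = {p, q} \<Longrightarrow> multigraph.adj (tri_edges w h) tri_ends p q"
  by (auto simp: tri_grid.adj_def)

lemma grid_edge_tri_adj:
  assumes "grid_edge R p q"
  shows "wall_grid_adj R p q"
proof -
  obtain a b c d where pq: "p = (a, b)" "q = (c, d)" by fastforce
  have bounds: "1 \<le> a" "a \<le> 2 * R" "1 \<le> b" "b \<le> R" "1 \<le> c" "c \<le> 2 * R" "1 \<le> d" "d \<le> R"
    using assms pq by (auto simp: grid_edge_def grid_vert_def)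
  have "(b = d \<and> (c = a + 1 \<or> a = c + 1)) \<or> (a = c \<and> (d = b + 1 \<or> b = d + 1))"
    using assms pq by (auto simp: grid_edge_def)
  then show ?thesis
  proof (elim disjE conjE)
    assume "b = d" "c = a + 1"
    then show ?thesis using bounds pq by (intro tri_adjI[of "Hor a b"]) (auto simp: tri_edges_def)
  next
    assume "b = d" "a = c + 1"
    then show ?thesis using bounds pq by (intro tri_adjI[of "Hor c d"]) (auto simp: tri_edges_def)
  next
    assume "a = c" "d = b + 1"
    then show ?thesis using bounds pq by (intro tri_adjI[of "Ver a b"]) (auto simp: tri_edges_def)
  next
    assume "a = c" "b = d + 1"
    then show ?thesis using bounds pq by (intro tri_adjI[of "Ver c d"]) (auto simp: tri_edges_def)
  qed
qed

lemma wall_edge_tri_adj: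
  assumes "cw_edge R (WallV p) (WallV q)"
  shows "wall_grid_adj R p q"
proof -
  have "wall_edge R p q \<or> wall_edge R q p"
    using assms unfolding cw_edge_def cw_edge0_def by blast
  then have "grid_edge R p q \<or> grid_edge R q p"
    by (auto simp: wall_edge_def)
  then show ?thesis
    using grid_edge_tri_adj tri_grid.adj_commute by blast
qed

lemma brick_corners_tri_adj:
  assumes b: "is_brick R b" and s: "s \<in> brick_corners b" "s' \<in> brick_corners b" "s \<noteq> s'"
  shows "wall_grid_adj R s s'"
proof -
  obtain i j where ij: "b = (i, j)" by fastforce
  have bounds: "1 \<le> i" "i + 2 \<le> 2 * R" "1 \<le> j" "j < R" using b ij by (auto simp: is_brick_def)
  have corners: "brick_corners b = {(i + 1, j), (i + 2, j), (i + 2, j + 1)}"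
    by (simp add: brick_corners_def ij brick_x2_def brick_x3_def brick_omega_def)
  have "{s, s'} = {(i + 1, j), (i + 2, j)} \<or> {s, s'} = {(i + 2, j), (i + 2, j + 1)}
      \<or> {s, s'} = {(i + 1, j), (i + 2, j + 1)}"
    using s unfolding corners by auto
  then show ?thesis
  proof (elim disjE)
    assume "{s, s'} = {(i + 1, j), (i + 2, j)}"
    then show ?thesis using bounds by (intro tri_adjI[of "Hor (i + 1) j"]) (auto simp: tri_edges_def)
  next
    assume "{s, s'} = {(i + 2, j), (i + 2, j + 1)}"
    then show ?thesis using bounds by (intro tri_adjI[of "Ver (i + 2) j"]) (auto simp: tri_edges_def)
  next
    assume "{s, s'} = {(i + 1, j), (i + 2, j + 1)}"
    then show ?thesis using bounds by (intro tri_adjI[of "Diag (i + 1) j"]) (auto simp: tri_edges_def)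
  qed
qed

lemma gadget_degree:
  assumes "t < 4"
  shows "finite {u. cw_edge R (NewV b t) u} \<and> card {u. cw_edge R (NewV b t) u} \<le> 4"
proof -
  define N where "N = (if t = 0 then {WallV (brick_x2 b), NewV b 1, NewV b 2, WallV (brick_omega b)}
    else if t = 1 then {NewV b 0, NewV b 2, NewV b 3, WallV (brick_omega b)}
    else if t = 2 then {NewV b 1, NewV b 3, NewV b 0, WallV (brick_omega b)}
    else {NewV b 2, WallV (brick_x3 b), NewV b 1, WallV (brick_omega b)})"
  have "{u. cw_edge R (NewV b t) u} \<subseteq> N"
    using assms unfolding N_def cw_edge_def cw_edge0_def by (auto simp: less_Suc_eq numeral_eq_Suc)
  moreover have "finite N" "card N \<le> 4" by (simp_all add: N_def card_insert_if)
  ultimately show ?thesis by (meson card_mono finite_subset order_trans)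
qed

text \<open>Contracting each brick gadget onto its corners maps the counterwall onto a subgraph of the
  triangulated grid.  A vertex of a set \<open>S\<close> is represented there by its anchors.\<close>

fun wall_anchors :: "cw_vertex set \<Rightarrow> cw_vertex \<Rightarrow> (nat \<times> nat) set" where
  "wall_anchors S (WallV p) = {p}"
| "wall_anchors S (NewV b t) = {s \<in> brick_corners b. WallV s \<in> S}"

lemma wall_anchors_subset: "u \<in> S \<Longrightarrow> wall_anchors S u \<subseteq> {p. WallV p \<in> S}"
  by (cases u) auto

lemma cw_edge_wall_anchors_adj:
  assumes uv: "cw_edge R u v" and s: "s \<in> wall_anchors S u" "s' \<in> wall_anchors S' v" "s \<noteq> s'"
  shows "wall_grid_adj R s s'"
proof (cases u)
  case (WallV p)
  show ?thesis
  proof (cases v)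
    case (WallV q)
    then show ?thesis using uv s \<open>u = WallV p\<close> wall_edge_tri_adj by simp
  next
    case (NewV b t)
    then have "is_brick R b" "p \<in> brick_corners b"
      using gadget_neighbour uv \<open>u = WallV p\<close> cw_edge_commute by blast+
    then show ?thesis using s \<open>u = WallV p\<close> NewV brick_corners_tri_adj by simp
  qed
next
  case (NewV b t)
  then have b: "is_brick R b" "v \<in> range (NewV b) \<or> v \<in> WallV ` brick_corners b"
    using gadget_neighbour uv by blast+
  then have "s' \<in> brick_corners b" using s(2) by auto
  then show ?thesis using s NewV b(1) brick_corners_tri_adj by simp
qed

lemma walk_to_wall_anchor:
  assumes "(\<lambda>a b. a \<in> S \<and> b \<in> S \<and> cw_edge R a b)\<^sup>*\<^sup>* (WallV x) u"
  shows "\<exists>s \<in> wall_anchors S u.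
    (\<lambda>p q. WallV p \<in> S \<and> WallV q \<in> S \<and> wall_grid_adj R p q)\<^sup>*\<^sup>* x s"
  using assms
proof (induction rule: rtranclp_induct)
  case base
  then show ?case by simp
next
  case (step y z)
  from step.IH obtain s where s: "s \<in> wall_anchors S y"
    "(\<lambda>p q. WallV p \<in> S \<and> WallV q \<in> S \<and> wall_grid_adj R p q)\<^sup>*\<^sup>* x s" by blast
  have yz: "y \<in> S" "z \<in> S" "cw_edge R y z" using step.hyps(2) by auto
  show ?case
  proof (cases z)
    case (WallV q)
    show ?thesis
    proof (cases "s = q")
      case False
      then have "wall_grid_adj R s q"
        using cw_edge_wall_anchors_adj[OF yz(3) s(1)] WallV by simp
      moreover have "WallV s \<in> S" using wall_anchors_subset[OF yz(1)] s(1) by blast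
      ultimately show ?thesis
        using s(2) yz(2) WallV by (auto intro: rtranclp.rtrancl_into_rtrancl)
    qed (use s WallV in simp)
  next
    case (NewV b t)
    have "s \<in> wall_anchors S z"
    proof (cases y)
      case (WallV p)
      then have "p \<in> brick_corners b"
        using gadget_neighbour yz(3) NewV cw_edge_commute by blast
      then show ?thesis using s(1) yz(1) WallV NewV by simp
    next
      case (NewV b' t')
      then have "cw_edge R (NewV b' t') (NewV b t)" using yz(3) \<open>z = NewV b t\<close> by simp
      then have "b' = b" using gadget_neighbour by blast
      then show ?thesis using s(1) NewV \<open>z = NewV b t\<close> by simp
    qed
    then show ?thesis using s(2) by blast
  qed
qed

lemma wall_anchor_exists:
  assumes "connected_set (cw_edge R) S" "WallV x \<in> S" "u \<in> S"
  shows "wall_anchors S u \<noteq> {}"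
proof -
  have "(\<lambda>a b. a \<in> S \<and> b \<in> S \<and> cw_edge R a b)\<^sup>*\<^sup>* (WallV x) u"
    using assms by (simp add: connected_set_def)
  from walk_to_wall_anchor[OF this] show ?thesis by blast
qed

lemma gadget_confined:
  assumes S: "connected_set (cw_edge R) S" "S \<subseteq> cw_vert R" and u: "NewV b t \<in> S"
    and no_corner: "\<forall>s \<in> brick_corners b. WallV s \<notin> S"
  shows "S \<subseteq> gadget b"
proof
  fix v assume "v \<in> S"
  then have "(\<lambda>a b. a \<in> S \<and> b \<in> S \<and> cw_edge R a b)\<^sup>*\<^sup>* (NewV b t) v"
    using S(1) u by (auto simp: connected_set_def)
  then have "v \<in> range (NewV b)"
  proof (induction rule: rtranclp_induct)
    case (step y z)
    then show ?case using gadget_neighbour no_corner by blast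
  qed simp
  then show "v \<in> gadget b"
    using \<open>v \<in> S\<close> S(2) by (auto simp: gadget_def cw_vert_def)
qed

locale counterwall_K6_model =
  fixes R :: nat and branch :: "nat \<Rightarrow> cw_vertex set"
  assumes branch_vert: "k < 6 \<Longrightarrow> branch k \<subseteq> cw_vert R"
    and branch_connected: "k < 6 \<Longrightarrow> connected_set (cw_edge R) (branch k)"
    and branch_disjoint: "k < 6 \<Longrightarrow> l < 6 \<Longrightarrow> k \<noteq> l \<Longrightarrow> branch k \<inter> branch l = {}"
    and branch_adjacent: "k < 6 \<Longrightarrow> l < 6 \<Longrightarrow> k \<noteq> l \<Longrightarrow> \<exists>u\<in>branch k. \<exists>v\<in>branch l. cw_edge R u v"
begin

lemma branch_nonempty: "k < 6 \<Longrightarrow> branch k \<noteq> {}"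
  using branch_connected by (simp add: connected_set_def)

lemma wall_parts_minor:
  assumes wall: "\<And>k. k < 6 \<Longrightarrow> \<exists>p. WallV p \<in> branch k"
  shows "is_minor (K_verts 6) K_edge UNIV (wall_grid_adj R)"
  unfolding is_minor_def K_verts_def
proof (intro exI[of _ "\<lambda>k. {p. WallV p \<in> branch k}"] conjI ballI impI)
  fix k assume "k \<in> {0..<6::nat}"
  then have k: "k < 6" by simp
  show "{p. WallV p \<in> branch k} \<subseteq> UNIV" by simp
  show "connected_set (wall_grid_adj R) {p. WallV p \<in> branch k}"
    unfolding connected_set_def
  proof (intro conjI ballI)
    show "{p. WallV p \<in> branch k} \<noteq> {}" using wall[OF k] by blast
    fix x y assume "x \<in> {p. WallV p \<in> branch k}" "y \<in> {p. WallV p \<in> branch k}"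
    then have "(\<lambda>a b. a \<in> branch k \<and> b \<in> branch k \<and> cw_edge R a b)\<^sup>*\<^sup>* (WallV x) (WallV y)"
      using branch_connected[OF k] by (simp add: connected_set_def)
    from walk_to_wall_anchor[OF this]
    show "(\<lambda>a b. a \<in> {p. WallV p \<in> branch k} \<and> b \<in> {p. WallV p \<in> branch k} \<and> wall_grid_adj R a b)\<^sup>*\<^sup>* x y"
      by simp
  qed
next
  fix k l assume kl: "k \<in> {0..<6::nat}" "l \<in> {0..<6::nat}"
  then show "k \<noteq> l \<Longrightarrow> {p. WallV p \<in> branch k} \<inter> {p. WallV p \<in> branch l} = {}"
    using branch_disjoint by auto
  assume "K_edge k l"
  then have kl': "k < 6" "l < 6" "k \<noteq> l" using kl by (auto simp: K_edge_def)
  then obtain u v where uv: "u \<in> branch k" "v \<in> branch l" "cw_edge R u v"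
    using branch_adjacent by blast
  obtain xk xl where "WallV xk \<in> branch k" "WallV xl \<in> branch l" using wall kl' by blast
  then have "wall_anchors (branch k) u \<noteq> {}" "wall_anchors (branch l) v \<noteq> {}"
    using wall_anchor_exists branch_connected kl' uv by blast+
  then obtain s s' where s: "s \<in> wall_anchors (branch k) u" "s' \<in> wall_anchors (branch l) v"
    by blast
  moreover have "WallV s \<in> branch k" "WallV s' \<in> branch l"
    using s wall_anchors_subset uv by blast+
  moreover have "s \<noteq> s'"
    using calculation branch_disjoint kl' by blast
  ultimately show "\<exists>a\<in>{p. WallV p \<in> branch k}. \<exists>b\<in>{p. WallV p \<in> branch l}. wall_grid_adj R a b"
    using cw_edge_wall_anchors_adj[OF uv(3)] by blast
qed

text \<open>A branch set avoiding the wall lies inside one gadget.  At most three branch sets reach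
  the corners of that gadget, so at least three lie among its four vertices; one of them is
  then a single vertex of degree four, too few for five neighbouring branch sets.\<close>

lemma no_singleton_gadget_branch:
  assumes k: "k < 6" and t: "t < 4"
  shows "branch k \<noteq> {NewV b t}"
proof
  assume single: "branch k = {NewV b t}"
  define M where "M = {..<6} - {k}"
  have "\<forall>l\<in>M. \<exists>u. u \<in> branch l \<and> cw_edge R (NewV b t) u"
    using branch_adjacent[OF k] single by (auto simp: M_def)
  from bchoice[OF this] obtain nb where nb: "\<And>l. l \<in> M \<Longrightarrow> nb l \<in> branch l \<and> cw_edge R (NewV b t) (nb l)"
    by blast
  have "inj_on nb M"
  proof (rule inj_onI)
    fix l l' assume "l \<in> M" "l' \<in> M" "nb l = nb l'"
    then have "nb l \<in> branch l \<inter> branch l'" using nb by fastforce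
    then show "l = l'" using branch_disjoint \<open>l \<in> M\<close> \<open>l' \<in> M\<close> by (auto simp: M_def)
  qed
  moreover have "nb ` M \<subseteq> {u. cw_edge R (NewV b t) u}" using nb by blast
  ultimately have "card M \<le> card {u. cw_edge R (NewV b t) u}"
    using gadget_degree[OF t] by (intro card_inj_on_le) auto
  moreover have "card M = 5" using k by (simp add: M_def)
  ultimately show False using gadget_degree[OF t, of R b] by simp
qed

lemma card_branches_in_gadget: "card {l. l < 6 \<and> branch l \<subseteq> gadget b} \<le> 2"
proof -
  define A where "A = {l. l < 6 \<and> branch l \<subseteq> gadget b}"
  have "finite A" by (simp add: A_def)
  have two: "2 \<le> card (branch l)" if "l \<in> A" for l
  proof -
    have "finite (branch l)" "branch l \<noteq> {}" "branch l \<subseteq> gadget b" "l < 6"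
      using that branch_nonempty finite_subset[of _ "gadget b"] by (auto simp: A_def gadget_def)
    moreover have "branch l \<noteq> {v}" if v: "v \<in> gadget b" for v
    proof -
      obtain t where "v = NewV b t" "t < 4" using v by (auto simp: gadget_def)
      then show ?thesis using no_singleton_gadget_branch[OF \<open>l < 6\<close> \<open>t < 4\<close>] by simp
    qed
    ultimately have "card (branch l) \<noteq> 0" "card (branch l) \<noteq> 1"
      by (auto simp: card_1_singleton_iff)
    then show ?thesis by linarith
  qed
  have "2 * card A = (\<Sum>l\<in>A. 2)" by simp
  also have "\<dots> \<le> (\<Sum>l\<in>A. card (branch l))" by (intro sum_mono two)
  also have "\<dots> = card (\<Union>l\<in>A. branch l)"
  proof (rule card_UN_disjoint[symmetric])
    show "finite A" by fact
    show "\<forall>l\<in>A. finite (branch l)"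
      unfolding A_def gadget_def using finite_subset by blast
    show "\<forall>l\<in>A. \<forall>l'\<in>A. l \<noteq> l' \<longrightarrow> branch l \<inter> branch l' = {}"
      unfolding A_def using branch_disjoint by blast
  qed
  also have "\<dots> \<le> card (gadget b)"
    by (intro card_mono) (auto simp: A_def gadget_def)
  also have "\<dots> \<le> 4"
    unfolding gadget_def using card_image_le[of "{..<4::nat}" "NewV b"] by simp
  finally show ?thesis by (simp add: A_def)
qed

lemma card_branches_at_corners: "card {l. l < 6 \<and> (\<exists>s\<in>brick_corners b. WallV s \<in> branch l)} \<le> 3"
proof -
  define B where "B = {l. l < 6 \<and> (\<exists>s\<in>brick_corners b. WallV s \<in> branch l)}"
  have "\<forall>l\<in>B. \<exists>s. s \<in> brick_corners b \<and> WallV s \<in> branch l" by (auto simp: B_def)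
  from bchoice[OF this] obtain c where c: "\<And>l. l \<in> B \<Longrightarrow> c l \<in> brick_corners b \<and> WallV (c l) \<in> branch l"
    by blast
  have "inj_on c B"
  proof (rule inj_onI)
    fix l l' assume "l \<in> B" "l' \<in> B" "c l = c l'"
    then have "WallV (c l) \<in> branch l \<inter> branch l'" using c by fastforce
    then show "l = l'" using branch_disjoint \<open>l \<in> B\<close> \<open>l' \<in> B\<close> by (auto simp: B_def)
  qed
  moreover have "c ` B \<subseteq> brick_corners b" using c by blast
  ultimately have "card B \<le> card (brick_corners b)"
    by (intro card_inj_on_le) (auto simp: brick_corners_def)
  also have "\<dots> \<le> 3" by (simp add: brick_corners_def card_insert_if)
  finally show ?thesis by (simp add: B_def)
qed

lemma branch_meets_wall:
  assumes k: "k < 6"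
  shows "\<exists>p. WallV p \<in> branch k"
proof (rule ccontr)
  assume no_wall: "\<nexists>p. WallV p \<in> branch k"
  obtain u where u: "u \<in> branch k" using branch_nonempty[OF k] by blast
  then obtain b t where "NewV b t \<in> branch k" using no_wall by (cases u) auto
  moreover have "\<forall>s\<in>brick_corners b. WallV s \<notin> branch k" using no_wall by blast
  ultimately have k_gadget: "branch k \<subseteq> gadget b"
    using gadget_confined[OF branch_connected[OF k] branch_vert[OF k]] by blast
  let ?A = "{l. l < 6 \<and> branch l \<subseteq> gadget b}"
  let ?B = "{l. l < 6 \<and> (\<exists>s\<in>brick_corners b. WallV s \<in> branch l)}"
  have "l \<in> ?A \<union> ?B" if l: "l < 6" for l
  proof (cases "l = k")
    case False
    then obtain u v where uv: "u \<in> branch k" "v \<in> branch l" "cw_edge R u v"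
      using branch_adjacent k l by blast
    then obtain t' where "u = NewV b t'" using k_gadget by (auto simp: gadget_def)
    then have "v \<in> range (NewV b) \<or> v \<in> WallV ` brick_corners b"
      using gadget_neighbour uv(3) by blast
    then show ?thesis
    proof
      assume "v \<in> range (NewV b)"
      then obtain t'' where "NewV b t'' \<in> branch l" using uv(2) by blast
      then show ?thesis
        using gadget_confined[OF branch_connected[OF l] branch_vert[OF l]] l by blast
    qed (use uv(2) l in blast)
  qed (use k_gadget k in simp)
  then have "{..<6} \<subseteq> ?A \<union> ?B" by blast
  then have "card {..<6::nat} \<le> card (?A \<union> ?B)" by (intro card_mono) auto
  also have "\<dots> \<le> card ?A + card ?B" by (rule card_Un_le)
  finally show False
    using card_branches_in_gadget[of b] card_branches_at_corners[of b] by simp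
qed

end

theorem mainTheorem8:
  fixes R :: nat
  assumes "R \<ge> 2"
  shows "\<not> is_minor (K_verts 6) K_edge (cw_vert R) (cw_edge R)"
proof
  assume "is_minor (K_verts 6) K_edge (cw_vert R) (cw_edge R)"
  then obtain branch where
    "\<forall>k\<in>{0..<6}. branch k \<subseteq> cw_vert R \<and> connected_set (cw_edge R) (branch k)"
    "\<forall>k\<in>{0..<6}. \<forall>l\<in>{0..<6}. k \<noteq> l \<longrightarrow> branch k \<inter> branch l = {}"
    "\<forall>k\<in>{0..<6}. \<forall>l\<in>{0..<6}. K_edge k l \<longrightarrow> (\<exists>u\<in>branch k. \<exists>v\<in>branch l. cw_edge R u v)"
    unfolding is_minor_def K_verts_def by blast
  then interpret counterwall_K6_model R branch
    by unfold_locales (auto simp: K_edge_def)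
  have "is_minor (K_verts 6) K_edge UNIV (wall_grid_adj R)"
    using wall_parts_minor branch_meets_wall by blast
  then show False
    using tri_grid.no_complete_minor[of 6] by simp
qed

end
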